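(* Let $t_1,\dots,t_n,s_1,\dots,s_n>0$. Then $(K^n,|\cdot|_{t_1}\times\cdots\times|\cdot|_{t_n})$ and $(K^n,|\cdot|_{s_1}\times\cdots\times|\cdot|_{s_n})$ are isometrically isomorphic if and only if, after a suitable permutation of $s_1,\dots,s_n$, one has $t_i/s_i\in V_K$ for each $i=1,\dots,n$.
   Context: $K$ is a complete non-archimedean non-trivially valued field which is not spherically complete, with valuation group $V_K=\{|x|:x\in K\setminus\{0\}\}$. $(K^n,|\cdot|_{t_1}\times\cdots\times|\cdot|_{t_n})$ denotes $K^n$ with norm $\|(x_1,\dots,x_n)\|=\max_it_i|x_i|$. *)

theory Defs
  imports Complex_Main "HOL-Combinatorics.Permutations"
begin

definition nonarch_abs :: "('a::field \<Rightarrow> real) \<Rightarrow> bool" where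
  "nonarch_abs v \<longleftrightarrow>
     (\<forall>x. v x \<ge> 0) \<and> (\<forall>x. v x = 0 \<longleftrightarrow> x = 0) \<and>
     (\<forall>x y. v (x * y) = v x * v y) \<and>
     (\<forall>x y. v (x + y) \<le> max (v x) (v y))"

definition nontrivial_abs :: "('a::field \<Rightarrow> real) \<Rightarrow> bool" where
  "nontrivial_abs v \<longleftrightarrow> (\<exists>x. x \<noteq> 0 \<and> v x \<noteq> 1)"

definition complete_abs :: "('a::field \<Rightarrow> real) \<Rightarrow> bool" where
  "complete_abs v \<longleftrightarrow>
     (\<forall>X :: nat \<Rightarrow> 'a.
        (\<forall>e>0. \<exists>N. \<forall>m\<ge>N. \<forall>k\<ge>N. v (X m - X k) < e) \<longrightarrow>
        (\<exists>L. \<forall>e>0. \<exists>N. \<forall>m\<ge>N. v (X m - L) < e))"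

definition closed_ball_v :: "('a::field \<Rightarrow> real) \<Rightarrow> 'a \<Rightarrow> real \<Rightarrow> 'a set" where
  "closed_ball_v v a r = {y. v (y - a) \<le> r}"

definition spherically_complete :: "('a::field \<Rightarrow> real) \<Rightarrow> bool" where
  "spherically_complete v \<longleftrightarrow>
     (\<forall>C. C \<noteq> {} \<and> (\<forall>B\<in>C. \<exists>a r. r > 0 \<and> B = closed_ball_v v a r) \<and>
          (\<forall>A\<in>C. \<forall>B\<in>C. A \<subseteq> B \<or> B \<subseteq> A) \<longrightarrow> \<Inter>C \<noteq> {})"

definition value_group :: "('a::field \<Rightarrow> real) \<Rightarrow> real set" where
  "value_group v = {v x | x. x \<noteq> 0}"

definition Kn :: "nat \<Rightarrow> (nat \<Rightarrow> 'a::field) set" where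
  "Kn n = {x. \<forall>i\<ge>n. x i = 0}"

definition wnorm :: "('a::field \<Rightarrow> real) \<Rightarrow> nat \<Rightarrow> (nat \<Rightarrow> real) \<Rightarrow> (nat \<Rightarrow> 'a) \<Rightarrow> real" where
  "wnorm v n t x = Max (insert 0 {t i * v (x i) | i. i < n})"

definition isometric_iso ::
  "('a::field \<Rightarrow> real) \<Rightarrow> nat \<Rightarrow> (nat \<Rightarrow> real) \<Rightarrow> (nat \<Rightarrow> real) \<Rightarrow> bool" where
  "isometric_iso v n t s \<longleftrightarrow>
     (\<exists>T :: (nat \<Rightarrow> 'a) \<Rightarrow> (nat \<Rightarrow> 'a).
        bij_betw T (Kn n) (Kn n) \<and>
        (\<forall>x\<in>Kn n. \<forall>y\<in>Kn n. T (\<lambda>i. x i + y i) = (\<lambda>i. T x i + T y i)) \<and>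
        (\<forall>c. \<forall>x\<in>Kn n. T (\<lambda>i. c * x i) = (\<lambda>i. c * T x i)) \<and>
        (\<forall>x\<in>Kn n. wnorm v n s (T x) = wnorm v n t x))"

end

theory Submission
  imports Defs
begin

text \<open>
  For \<open>r > 0\<close> call a family \<open>x\<^sub>j\<close> (\<open>j \<in> I\<close>) in \<open>K\<^sup>n\<close> orthonormal at radius \<open>r\<close> if each
  member has norm at most \<open>r\<close> and every combination \<open>\<Sum> a\<^sub>j x\<^sub>j\<close> with \<open>max |a\<^sub>j| = 1\<close> has
  norm exactly \<open>r\<close>. The largest such family has as many members as there are indices \<open>i\<close>
  with \<open>r / t\<^sub>i \<in> V\<^sub>K\<close>: suitably scaled unit vectors give that many, and a larger family,
  rescaled on those coordinates into the unit ball, is linearly dependent modulo the maximal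
  ideal, which produces a combination of norm \<open>< r\<close> (on the other coordinates the value
  \<open>r\<close> is never attained). This number is an invariant of isometric isomorphism, and
  knowing it for every \<open>r\<close> amounts to knowing the multiset of cosets \<open>t\<^sub>i V\<^sub>K\<close>, i.e. a
  permutation matching the \<open>t\<^sub>i\<close> with the \<open>s\<^sub>i\<close> modulo \<open>V\<^sub>K\<close>.

  The argument only uses that the absolute value is ultrametric.
\<close>

locale nonarch_valued =
  fixes v :: "'a::field \<Rightarrow> real"
  assumes nonarch_abs: "nonarch_abs v"
begin

lemma v_nonneg: "0 \<le> v x"
  and v_eq_0_iff: "v x = 0 \<longleftrightarrow> x = 0"
  and v_mult: "v (x * y) = v x * v y"
  and v_add_le_max: "v (x + y) \<le> max (v x) (v y)"
  using nonarch_abs unfolding nonarch_abs_def by auto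

lemma v_zero [simp]: "v 0 = 0"
  by (simp add: v_eq_0_iff)

lemma v_one [simp]: "v 1 = 1"
proof -
  have "v 1 * v 1 = v 1"
    using v_mult[of 1 1] by simp
  then show ?thesis
    using v_eq_0_iff[of 1] by simp
qed

lemma v_minus [simp]: "v (- x) = v x"
proof -
  have "v (- 1) * v (- 1) = 1"
    using v_mult[of "- 1" "- 1"] by simp
  then have "v (- 1) = 1"
    using v_nonneg[of "- 1"] power2_eq_1_iff[of "v (- 1)"] by (auto simp: power2_eq_square)
  then show ?thesis
    using v_mult[of "- 1" x] by simp
qed

lemma v_divide: "v (x / y) = v x / v y"
proof (cases "y = 0")
  case False
  then have "v (x / y) * v y = v x"
    using v_mult[of "x / y" y] by simp
  then show ?thesis
    using False by (simp add: eq_divide_eq v_eq_0_iff)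
qed simp

lemma v_diff_le_max: "v (x - y) \<le> max (v x) (v y)"
  using v_add_le_max[of x "- y"] by simp

lemma v_sum_le:
  assumes "finite R" "0 \<le> c" "\<And>j. j \<in> R \<Longrightarrow> v (f j) \<le> c"
  shows "v (sum f R) \<le> c"
  using assms
proof (induction R rule: finite_induct)
  case (insert j R)
  have "v (sum f (insert j R)) = v (f j + sum f R)"
    using insert.hyps by simp
  also have "\<dots> \<le> max (v (f j)) (v (sum f R))"
    by (rule v_add_le_max)
  also have "\<dots> \<le> c"
    using insert by simp
  finally show ?case .
qed simp

lemma v_sum_less:
  assumes "finite R" "0 < c" "\<And>j. j \<in> R \<Longrightarrow> v (f j) < c"
  shows "v (sum f R) < c"
  using assms
proof (induction R rule: finite_induct)
  case (insert j R)
  have "v (sum f (insert j R)) = v (f j + sum f R)"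
    using insert.hyps by simp
  also have "\<dots> \<le> max (v (f j)) (v (sum f R))"
    by (rule v_add_le_max)
  also have "\<dots> < c"
    using insert by simp
  finally show ?case .
qed simp

lemma v_comb_le:
  assumes "finite R" "0 \<le> c" "\<forall>j\<in>R. v (a j) \<le> 1" "\<forall>j\<in>R. v (x j) \<le> c"
  shows "v (\<Sum>j\<in>R. a j * x j) \<le> c"
proof (rule v_sum_le[OF assms(1,2)])
  fix j assume "j \<in> R"
  then have "v (a j) * v (x j) \<le> 1 * c"
    using assms(3,4) v_nonneg by (intro mult_mono) auto
  then show "v (a j * x j) \<le> c"
    by (simp add: v_mult)
qed

lemma v_comb_less:
  assumes "finite R" "0 < c" "\<forall>j\<in>R. v (a j) \<le> 1" "\<forall>j\<in>R. v (x j) < c"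
  shows "v (\<Sum>j\<in>R. a j * x j) < c"
proof (rule v_sum_less[OF assms(1,2)])
  fix j assume j: "j \<in> R"
  have "v (a j) * v (x j) \<le> 1 * v (x j)"
    using assms(3) j v_nonneg by (intro mult_right_mono) auto
  also have "\<dots> < c"
    using assms(4) j by simp
  finally show "v (a j * x j) < c"
    by (simp add: v_mult)
qed

lemma value_in_value_group: "x \<noteq> 0 \<Longrightarrow> v x \<in> value_group v"
  unfolding value_group_def by auto

lemma one_in_value_group: "1 \<in> value_group v"
  using value_in_value_group[of 1] by simp

lemma mult_in_value_group:
  assumes "g \<in> value_group v" "h \<in> value_group v"
  shows "g * h \<in> value_group v"
  using assms value_in_value_group[of "_ * _"] unfolding value_group_def by (auto simp: v_mult)

lemma divide_in_value_group:
  assumes "g \<in> value_group v" "h \<in> value_group v"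
  shows "g / h \<in> value_group v"
  using assms value_in_value_group[of "_ / _"] unfolding value_group_def by (auto simp: v_divide)

lemma obtain_elements_with_values:
  assumes "\<forall>i\<in>J. g i \<in> value_group v"
  obtains c where "\<forall>i\<in>J. c i \<noteq> 0 \<and> v (c i) = g i"
proof -
  have "\<forall>i\<in>J. \<exists>c. c \<noteq> 0 \<and> v c = g i"
    using assms unfolding value_group_def by fastforce
  then show thesis
    using that by metis
qed

end

text \<open>The coefficient vectors that lie in the unit ball and reduce to a nonzero vector over the
  residue field.\<close>

definition primitive :: "('a::field \<Rightarrow> real) \<Rightarrow> 'b set \<Rightarrow> ('b \<Rightarrow> 'a) \<Rightarrow> bool" where
  "primitive v R a \<longleftrightarrow> (\<forall>j\<in>R. v (a j) \<le> 1) \<and> (\<exists>j\<in>R. v (a j) = 1)"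

context nonarch_valued
begin

lemma v_elim_entry_le_one:
  assumes "v x \<le> 1" "v y \<le> 1" "v z \<le> 1" "v p = 1"
  shows "v (x - y / p * z) \<le> 1"
proof -
  have "v (y / p * z) \<le> 1"
    using assms(2-4) by (simp add: v_mult v_divide mult_le_one v_nonneg)
  then show ?thesis
    using assms(1) by (meson v_diff_le_max max.boundedI order_trans)
qed

lemma pivot_elimination:
  assumes R: "finite R" and j0: "j0 \<in> R" "v (u j0 i) = 1"
    and col: "\<forall>j\<in>R. v (u j i) \<le> 1"
    and b: "primitive v (R - {j0}) b"
  obtains a where "primitive v R a"
    and "\<And>k. (\<Sum>j\<in>R. a j * u j k) = (\<Sum>j\<in>R - {j0}. b j * (u j k - u j i / u j0 i * u j0 k))"
proof
  define q where "q j = u j i / u j0 i" for j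
  define a where "a j = (if j = j0 then - (\<Sum>j\<in>R - {j0}. b j * q j) else b j)" for j
  have q: "\<forall>j\<in>R. v (q j) \<le> 1"
    using col j0 by (simp add: q_def v_divide)
  have "v (\<Sum>j\<in>R - {j0}. b j * q j) \<le> 1"
    using b q R by (intro v_comb_le) (auto simp: primitive_def)
  then show "primitive v R a"
    using b j0(1) by (auto simp: primitive_def a_def)
  fix k
  have "(\<Sum>j\<in>R. a j * u j k) = a j0 * u j0 k + (\<Sum>j\<in>R - {j0}. a j * u j k)"
    using sum.remove[OF R j0(1)] by simp
  also have "(\<Sum>j\<in>R - {j0}. a j * u j k) = (\<Sum>j\<in>R - {j0}. b j * u j k)"
    by (intro sum.cong) (auto simp: a_def)
  also have "a j0 * u j0 k + (\<Sum>j\<in>R - {j0}. b j * u j k)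
      = (\<Sum>j\<in>R - {j0}. b j * (u j k - q j * u j0 k))"
    by (simp add: a_def right_diff_distrib sum_subtractf sum_distrib_right mult.assoc)
  finally show "(\<Sum>j\<in>R. a j * u j k) = (\<Sum>j\<in>R - {j0}. b j * (u j k - u j i / u j0 i * u j0 k))"
    by (simp add: q_def)
qed

text \<open>Gaussian elimination over the valuation ring: more than \<open>card J\<close> vectors in the unit ball of
  \<open>K\<^sup>J\<close> are linearly dependent modulo the maximal ideal.\<close>

lemma exists_primitive_comb_small:
  assumes "finite J" "finite R" "card J < card R" "\<forall>j\<in>R. \<forall>i\<in>J. v (u j i) \<le> 1"
  shows "\<exists>a. primitive v R a \<and> (\<forall>i\<in>J. v (\<Sum>j\<in>R. a j * u j i) < 1)"
  using assms
proof (induction J arbitrary: R u rule: finite_induct)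
  case empty
  then obtain j0 where "j0 \<in> R"
    by fastforce
  then have "primitive v R (\<lambda>j. if j = j0 then 1 else 0)"
    by (auto simp: primitive_def)
  then show ?case
    by blast
next
  case (insert i J)
  consider (small) "\<forall>j\<in>R. v (u j i) < 1" | (pivot) j0 where "j0 \<in> R" "v (u j0 i) = 1"
    using insert.prems(3) by force
  then show ?case
  proof cases
    case small
    obtain a where a: "primitive v R a" "\<forall>k\<in>J. v (\<Sum>j\<in>R. a j * u j k) < 1"
      using insert.IH[of R u] insert.prems insert.hyps by auto
    moreover have "v (\<Sum>j\<in>R. a j * u j i) < 1"
      using a(1) small insert.prems(1) by (intro v_comb_less) (auto simp: primitive_def)
    ultimately show ?thesis
      by auto
  next
    case pivot
    define u' where "u' j k = u j k - u j i / u j0 i * u j0 k" for j k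
    have "v (u' j k) \<le> 1" if "j \<in> R" "k \<in> J" for j k
      unfolding u'_def using insert.prems(3) pivot that by (intro v_elim_entry_le_one) auto
    moreover have "card J < card (R - {j0})"
      using insert.hyps insert.prems(2) pivot(1) by simp
    ultimately obtain b where b: "primitive v (R - {j0}) b"
      "\<forall>k\<in>J. v (\<Sum>j\<in>R - {j0}. b j * u' j k) < 1"
      using insert.IH[of "R - {j0}" u'] insert.prems(1) by auto
    obtain a where a: "primitive v R a" "\<And>k. (\<Sum>j\<in>R. a j * u j k) = (\<Sum>j\<in>R - {j0}. b j * u' j k)"
      using pivot_elimination[of R j0 u i b] insert.prems(1,3) pivot b(1)
      unfolding u'_def by auto
    have "u j0 i \<noteq> 0"
      using pivot(2) by auto
    then have "(\<Sum>j\<in>R - {j0}. b j * u' j i) = 0"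
      by (simp add: u'_def)
    then show ?thesis
      using a b(2) by auto
  qed
qed

end

lemma wnorm_eq_Max_image: "wnorm v n t x = Max (insert 0 ((\<lambda>i. t i * v (x i)) ` {..<n}))"
  unfolding wnorm_def by (rule arg_cong[of _ _ "\<lambda>S. Max (insert 0 S)"]) auto

lemma wnorm_le_iff: "wnorm v n t x \<le> r \<longleftrightarrow> 0 \<le> r \<and> (\<forall>i<n. t i * v (x i) \<le> r)"
  unfolding wnorm_eq_Max_image by auto

lemma wnorm_less_iff: "wnorm v n t x < r \<longleftrightarrow> 0 < r \<and> (\<forall>i<n. t i * v (x i) < r)"
  unfolding wnorm_eq_Max_image by auto

lemma wnorm_eqI:
  assumes "0 \<le> r" "\<forall>i<n. t i * v (x i) \<le> r" "k < n" "t k * v (x k) = r"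
  shows "wnorm v n t x = r"
  unfolding wnorm_eq_Max_image using assms by (intro Max_eqI) auto

definition coset_count :: "real set \<Rightarrow> nat \<Rightarrow> (nat \<Rightarrow> real) \<Rightarrow> real \<Rightarrow> nat" where
  "coset_count G n t r = card {i. i < n \<and> r / t i \<in> G}"

definition orthonormal_family ::
  "('a::field \<Rightarrow> real) \<Rightarrow> nat \<Rightarrow> (nat \<Rightarrow> real) \<Rightarrow> real \<Rightarrow> 'b set \<Rightarrow> ('b \<Rightarrow> nat \<Rightarrow> 'a) \<Rightarrow> bool"
where
  "orthonormal_family v n t r I x \<longleftrightarrow>
     (\<forall>j\<in>I. x j \<in> Kn n \<and> wnorm v n t (x j) \<le> r) \<and>
     (\<forall>a. primitive v I a \<longrightarrow> wnorm v n t (\<lambda>i. \<Sum>j\<in>I. a j * x j i) = r)"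

context nonarch_valued
begin

lemma scaled_comb_less_of_notin_value_group:
  assumes "r / c \<notin> value_group v" "c > 0" "r > 0" "finite I"
    and "\<forall>j\<in>I. v (a j) \<le> 1" "\<forall>j\<in>I. c * v (x j) \<le> r"
  shows "c * v (\<Sum>j\<in>I. a j * x j) < r"
proof -
  let ?y = "\<Sum>j\<in>I. a j * x j"
  have "v ?y \<le> r / c"
    using assms(2-6) by (intro v_comb_le) (auto simp: field_simps)
  then have "c * v ?y \<le> r"
    using assms(2) by (simp add: field_simps)
  moreover have "c * v ?y \<noteq> r"
  proof
    assume "c * v ?y = r"
    then have "r / c = v ?y" "?y \<noteq> 0"
      using assms(2,3) by (auto simp: field_simps)
    then show False
      using assms(1) value_in_value_group by metis
  qed
  ultimately show ?thesis
    by simp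
qed

lemma orthonormal_family_card_le:
  assumes t: "\<forall>i<n. t i > 0" and r: "r > 0"
    and I: "finite I" and x: "orthonormal_family v n t r I x"
  shows "card I \<le> coset_count (value_group v) n t r"
proof (rule ccontr)
  define J where "J = {i. i < n \<and> r / t i \<in> value_group v}"
  assume "\<not> ?thesis"
  then have card: "card J < card I"
    by (simp add: coset_count_def J_def)
  obtain c where c: "\<forall>i\<in>J. c i \<noteq> 0 \<and> v (c i) = r / t i"
    using obtain_elements_with_values[of J "\<lambda>i. r / t i"] by (auto simp: J_def)
  have xi: "t i * v (x j i) \<le> r" if "j \<in> I" "i < n" for i j
    using x that by (auto simp: orthonormal_family_def wnorm_le_iff)
  have "v (x j i / c i) \<le> 1" if "j \<in> I" "i \<in> J" for j i
    using xi[OF that(1)] c t r that(2) by (auto simp: v_divide J_def field_simps)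
  then obtain a where a: "primitive v I a" "\<forall>i\<in>J. v (\<Sum>j\<in>I. a j * (x j i / c i)) < 1"
    using exists_primitive_comb_small[of J I "\<lambda>j i. x j i / c i"] card I by (auto simp: J_def)
  define y where "y i = (\<Sum>j\<in>I. a j * x j i)" for i
  have "t i * v (y i) < r" if i: "i < n" for i
  proof (cases "i \<in> J")
    case True
    have "y i = (\<Sum>j\<in>I. a j * (x j i / c i)) * c i"
      using c True by (simp add: y_def sum_distrib_right)
    then have "v (y i) = v (\<Sum>j\<in>I. a j * (x j i / c i)) * (r / t i)"
      using c True by (simp add: v_mult)
    also have "\<dots> < 1 * (r / t i)"
      using a(2) True r t i by (intro mult_strict_right_mono) auto
    finally show ?thesis
      using t i by (simp add: field_simps)
  next
    case False
    then show ?thesis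
      unfolding y_def using a(1) xi t i r I
      by (intro scaled_comb_less_of_notin_value_group) (auto simp: J_def primitive_def)
  qed
  then have "wnorm v n t y < r"
    using r by (simp add: wnorm_less_iff)
  moreover have "wnorm v n t y = r"
    using x a(1) unfolding orthonormal_family_def y_def by blast
  ultimately show False
    by simp
qed

lemma wnorm_diagonal_primitive:
  assumes "J \<subseteq> {..<n}" "r \<ge> 0" "\<forall>i\<in>J. t i * v (c i) = r" "primitive v J a"
  shows "wnorm v n t (\<lambda>i. if i \<in> J then a i * c i else 0) = r"
proof -
  obtain k where k: "k \<in> J" "v (a k) = 1" and a: "\<forall>j\<in>J. v (a j) \<le> 1"
    using assms(4) by (auto simp: primitive_def)
  have "t i * v (a i * c i) = v (a i) * r" if "i \<in> J" for i
    using assms(3) that by (simp add: v_mult mult.left_commute)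
  then have "\<forall>i<n. t i * v (if i \<in> J then a i * c i else 0) \<le> r"
    using a assms(2) v_nonneg by (simp add: mult_left_le_one_le)
  moreover have "t k * v (if k \<in> J then a k * c k else 0) = r"
    using k assms(3) by (simp add: v_mult)
  ultimately show ?thesis
    using k(1) assms(1,2) by (intro wnorm_eqI) auto
qed

lemma orthonormal_family_exists:
  assumes t: "\<forall>i<n. t i > 0" and r: "r > 0"
  defines "J \<equiv> {i. i < n \<and> r / t i \<in> value_group v}"
  shows "\<exists>x. orthonormal_family v n t r J x"
proof -
  obtain c where c: "\<forall>i\<in>J. c i \<noteq> 0 \<and> v (c i) = r / t i"
    using obtain_elements_with_values[of J "\<lambda>i. r / t i"] by (auto simp: J_def)
  then have tc: "t i * v (c i) = r" if "i \<in> J" for i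
    using t that by (auto simp: J_def)
  define x where "x j i = (if i = j then c i else 0)" for j i
  have "finite J"
    by (simp add: J_def)
  have comb: "(\<Sum>j\<in>J. a j * x j i) = (if i \<in> J then a i * c i else 0)" for a i
  proof -
    have "(\<Sum>j\<in>J. a j * x j i) = (\<Sum>j\<in>J. if i = j then a i * c i else 0)"
      by (intro sum.cong) (auto simp: x_def)
    then show ?thesis
      using \<open>finite J\<close> by simp
  qed
  have "orthonormal_family v n t r J x"
    unfolding orthonormal_family_def
  proof (intro conjI ballI allI impI)
    fix j assume j: "j \<in> J"
    then show "x j \<in> Kn n"
      by (auto simp: x_def Kn_def J_def)
    show "wnorm v n t (x j) \<le> r"
      using tc[OF j] r by (auto simp: x_def wnorm_le_iff)
  next
    fix a assume "primitive v J a"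
    moreover have "J \<subseteq> {..<n}"
      by (auto simp: J_def)
    ultimately show "wnorm v n t (\<lambda>i. \<Sum>j\<in>J. a j * x j i) = r"
      using wnorm_diagonal_primitive[of J n r t c a] tc r by (simp add: comb)
  qed
  then show ?thesis
    by blast
qed

end

definition Kn_linear :: "nat \<Rightarrow> ((nat \<Rightarrow> 'a::field) \<Rightarrow> nat \<Rightarrow> 'a) \<Rightarrow> bool" where
  "Kn_linear n T \<longleftrightarrow>
     (\<forall>x\<in>Kn n. \<forall>y\<in>Kn n. T (\<lambda>i. x i + y i) = (\<lambda>i. T x i + T y i)) \<and>
     (\<forall>c. \<forall>x\<in>Kn n. T (\<lambda>i. c * x i) = (\<lambda>i. c * T x i))"

lemma isometric_iso_iff:
  "isometric_iso v n t s \<longleftrightarrow>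
     (\<exists>T. bij_betw T (Kn n) (Kn n) \<and> Kn_linear n T \<and> (\<forall>x\<in>Kn n. wnorm v n s (T x) = wnorm v n t x))"
  unfolding isometric_iso_def Kn_linear_def by blast

lemma Kn_add: "x \<in> Kn n \<Longrightarrow> y \<in> Kn n \<Longrightarrow> (\<lambda>i. x i + y i) \<in> Kn n"
  and Kn_scale: "x \<in> Kn n \<Longrightarrow> (\<lambda>i. c * x i) \<in> Kn n"
  by (auto simp: Kn_def)

lemma Kn_comb: "\<forall>j\<in>I. x j \<in> Kn n \<Longrightarrow> (\<lambda>i. \<Sum>j\<in>I. a j * x j i) \<in> Kn n"
  by (auto simp: Kn_def)

lemma Kn_linear_add: "Kn_linear n T \<Longrightarrow> x \<in> Kn n \<Longrightarrow> y \<in> Kn n \<Longrightarrow> T (\<lambda>i. x i + y i) = (\<lambda>i. T x i + T y i)"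
  and Kn_linear_scale: "Kn_linear n T \<Longrightarrow> x \<in> Kn n \<Longrightarrow> T (\<lambda>i. c * x i) = (\<lambda>i. c * T x i)"
  unfolding Kn_linear_def by blast+

lemma Kn_linear_comb:
  assumes T: "Kn_linear n T" and "finite I" "\<forall>j\<in>I. x j \<in> Kn n"
  shows "T (\<lambda>i. \<Sum>j\<in>I. a j * x j i) = (\<lambda>i. \<Sum>j\<in>I. a j * T (x j) i)"
  using assms(2,3)
proof (induction I rule: finite_induct)
  case empty
  have "(\<lambda>i. 0) \<in> Kn n"
    by (simp add: Kn_def)
  then show ?case
    using Kn_linear_scale[OF T, of "\<lambda>i. 0" 0] by simp
next
  case (insert j I)
  have xj: "x j \<in> Kn n" and xI: "\<forall>j\<in>I. x j \<in> Kn n"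
    using insert.prems by auto
  have "T (\<lambda>i. \<Sum>j\<in>insert j I. a j * x j i) = T (\<lambda>i. a j * x j i + (\<Sum>j\<in>I. a j * x j i))"
    using insert.hyps by simp
  also have "\<dots> = (\<lambda>i. T (\<lambda>i. a j * x j i) i + T (\<lambda>i. \<Sum>j\<in>I. a j * x j i) i)"
    by (rule Kn_linear_add[OF T Kn_scale[OF xj] Kn_comb[OF xI]])
  also have "\<dots> = (\<lambda>i. \<Sum>j\<in>insert j I. a j * T (x j) i)"
    using insert.IH[OF xI] Kn_linear_scale[OF T xj] insert.hyps by simp
  finally show ?case .
qed

lemma Kn_linear_inv_into:
  assumes bij: "bij_betw T (Kn n) (Kn n)" and T: "Kn_linear n T"
  shows "Kn_linear n (inv_into (Kn n) T)"
proof -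
  let ?S = "inv_into (Kn n) T"
  have S: "?S y \<in> Kn n" "T (?S y) = y" if "y \<in> Kn n" for y
    using bij_betw_apply[OF bij_betw_inv_into[OF bij] that] bij_betw_inv_into_right[OF bij that]
    by auto
  have ST: "?S (T x) = x" if "x \<in> Kn n" for x
    using bij_betw_inv_into_left[OF bij that] .
  have "?S (\<lambda>i. x i + y i) = (\<lambda>i. ?S x i + ?S y i)" if "x \<in> Kn n" "y \<in> Kn n" for x y
  proof -
    have "T (\<lambda>i. ?S x i + ?S y i) = (\<lambda>i. x i + y i)"
      using Kn_linear_add[OF T S(1)[OF that(1)] S(1)[OF that(2)]] S(2) that by simp
    then show ?thesis
      using ST[OF Kn_add[OF S(1)[OF that(1)] S(1)[OF that(2)]]] by simp
  qed
  moreover have "?S (\<lambda>i. c * x i) = (\<lambda>i. c * ?S x i)" if "x \<in> Kn n" for c x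
  proof -
    have "T (\<lambda>i. c * ?S x i) = (\<lambda>i. c * x i)"
      using Kn_linear_scale[OF T S(1)[OF that]] S(2) that by simp
    then show ?thesis
      using ST[OF Kn_scale[OF S(1)[OF that], where c = c]] by simp
  qed
  ultimately show ?thesis
    by (simp add: Kn_linear_def)
qed

lemma isometric_iso_sym:
  assumes "isometric_iso v n t s"
  shows "isometric_iso v n s t"
proof -
  obtain T where T: "bij_betw T (Kn n) (Kn n)" "Kn_linear n T"
    and norm: "\<forall>x\<in>Kn n. wnorm v n s (T x) = wnorm v n t x"
    using assms unfolding isometric_iso_iff by blast
  let ?S = "inv_into (Kn n) T"
  have "wnorm v n t (?S y) = wnorm v n s y" if "y \<in> Kn n" for y
    using norm bij_betw_apply[OF bij_betw_inv_into[OF T(1)] that] bij_betw_inv_into_right[OF T(1) that]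
    by force
  then show ?thesis
    unfolding isometric_iso_iff using bij_betw_inv_into[OF T(1)] Kn_linear_inv_into[OF T] by blast
qed

lemma orthonormal_family_image:
  assumes T: "T ` Kn n \<subseteq> Kn n" "Kn_linear n T"
    and norm: "\<forall>x\<in>Kn n. wnorm v n s (T x) = wnorm v n t x"
    and I: "finite I" and x: "orthonormal_family v n t r I x"
  shows "orthonormal_family v n s r I (\<lambda>j. T (x j))"
  unfolding orthonormal_family_def
proof (intro conjI ballI allI impI)
  fix j assume "j \<in> I"
  then have "x j \<in> Kn n" "wnorm v n t (x j) \<le> r"
    using x by (auto simp: orthonormal_family_def)
  then show "T (x j) \<in> Kn n" "wnorm v n s (T (x j)) \<le> r"
    using T(1) norm by auto
next
  fix a assume a: "primitive v I a"
  have xK: "\<forall>j\<in>I. x j \<in> Kn n"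
    using x by (simp add: orthonormal_family_def)
  have "wnorm v n s (\<lambda>i. \<Sum>j\<in>I. a j * T (x j) i) = wnorm v n s (T (\<lambda>i. \<Sum>j\<in>I. a j * x j i))"
    by (simp add: Kn_linear_comb[OF T(2) I xK])
  also have "\<dots> = wnorm v n t (\<lambda>i. \<Sum>j\<in>I. a j * x j i)"
    using norm Kn_comb[OF xK] by blast
  also have "\<dots> = r"
    using x a by (simp add: orthonormal_family_def)
  finally show "wnorm v n s (\<lambda>i. \<Sum>j\<in>I. a j * T (x j) i) = r" .
qed

context nonarch_valued
begin

lemma coset_count_le_of_isometric_iso:
  assumes iso: "isometric_iso v n t s" and t: "\<forall>i<n. t i > 0" and s: "\<forall>i<n. s i > 0" and r: "r > 0"
  shows "coset_count (value_group v) n t r \<le> coset_count (value_group v) n s r"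
proof -
  obtain T where T: "bij_betw T (Kn n) (Kn n)" "Kn_linear n T"
    and norm: "\<forall>x\<in>Kn n. wnorm v n s (T x) = wnorm v n t x"
    using iso unfolding isometric_iso_iff by blast
  define J where "J = {i. i < n \<and> r / t i \<in> value_group v}"
  have J: "finite J"
    by (simp add: J_def)
  have TK: "T ` Kn n \<subseteq> Kn n"
    using T(1) by (simp add: bij_betw_def)
  obtain x where "orthonormal_family v n t r J x"
    using orthonormal_family_exists[OF t r] unfolding J_def by blast
  then have "orthonormal_family v n s r J (\<lambda>j. T (x j))"
    by (rule orthonormal_family_image[OF TK T(2) norm J])
  then have "card J \<le> coset_count (value_group v) n s r"
    by (rule orthonormal_family_card_le[OF s r J])
  then show ?thesis
    by (simp add: coset_count_def J_def)
qed

end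

lemma coset_count_Suc:
  "coset_count G (Suc n) t r = coset_count G n t r + (if r / t n \<in> G then 1 else 0)"
proof (cases "r / t n \<in> G")
  case True
  then have "{i. i < Suc n \<and> r / t i \<in> G} = insert n {i. i < n \<and> r / t i \<in> G}"
    by (auto simp: less_Suc_eq)
  then show ?thesis
    using True by (simp add: coset_count_def)
next
  case False
  then have "{i. i < Suc n \<and> r / t i \<in> G} = {i. i < n \<and> r / t i \<in> G}"
    by (auto simp: less_Suc_eq)
  then show ?thesis
    using False by (simp add: coset_count_def)
qed

lemma coset_count_permute:
  assumes "\<tau> permutes {..<n}"
  shows "coset_count G n (s \<circ> \<tau>) r = coset_count G n s r"
proof -
  have "{i. i < n \<and> r / (s \<circ> \<tau>) i \<in> G} = \<tau> -` {i. i < n \<and> r / s i \<in> G}"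
    using permutes_in_image[OF assms] by auto
  moreover have "card (\<tau> -` {i. i < n \<and> r / s i \<in> G}) = card {i. i < n \<and> r / s i \<in> G}"
    using permutes_inj[OF assms] permutes_surj[OF assms] by (intro card_vimage_inj) auto
  ultimately show ?thesis
    by (simp only: coset_count_def)
qed

lemma coset_count_partner:
  assumes "1 \<in> G" "t n > 0" "coset_count G (Suc n) t (t n) = coset_count G (Suc n) s (t n)"
  obtains j where "j < Suc n" "t n / s j \<in> G"
proof -
  have "coset_count G (Suc n) t (t n) \<noteq> 0"
    using assms(1,2) by (simp add: coset_count_Suc)
  then have "coset_count G (Suc n) s (t n) \<noteq> 0"
    using assms(3) by simp
  then have "{i. i < Suc n \<and> t n / s i \<in> G} \<noteq> {}"
    unfolding coset_count_def by (metis card.empty)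
  then show thesis
    using that by blast
qed

lemma coset_count_drop_last:
  fixes G :: "real set"
  assumes G: "\<And>g h. g \<in> G \<Longrightarrow> h \<in> G \<Longrightarrow> g * h \<in> G" "\<And>g h. g \<in> G \<Longrightarrow> h \<in> G \<Longrightarrow> g / h \<in> G"
    and "t n / s n \<in> G" "t n \<noteq> 0" "s n \<noteq> 0"
    and "coset_count G (Suc n) t r = coset_count G (Suc n) s r"
  shows "coset_count G n t r = coset_count G n s r"
proof -
  have "r / t n \<in> G \<longleftrightarrow> r / s n \<in> G"
  proof
    assume "r / t n \<in> G"
    then have "r / t n * (t n / s n) \<in> G"
      using G(1) assms(3) by blast
    then show "r / s n \<in> G"
      using assms(4) by simp
  next
    assume "r / s n \<in> G"
    then have "r / s n / (t n / s n) \<in> G"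
      using G(2) assms(3) by blast
    then show "r / t n \<in> G"
      using assms(4,5) by simp
  qed
  then show ?thesis
    using assms(6) unfolding coset_count_Suc by simp
qed

lemma permutation_of_coset_count_eq:
  fixes G :: "real set"
  assumes G: "1 \<in> G" "\<And>g h. g \<in> G \<Longrightarrow> h \<in> G \<Longrightarrow> g * h \<in> G"
      "\<And>g h. g \<in> G \<Longrightarrow> h \<in> G \<Longrightarrow> g / h \<in> G"
    and "\<forall>i<n. t i > 0" "\<forall>i<n. s i > 0" "\<forall>r>0. coset_count G n t r = coset_count G n s r"
  shows "\<exists>\<sigma>. \<sigma> permutes {..<n} \<and> (\<forall>i<n. t i / s (\<sigma> i) \<in> G)"
  using assms(4-6)
proof (induction n arbitrary: s)
  case 0
  show ?case
    by (auto intro: permutes_id)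
next
  case (Suc n)
  have tn: "t n > 0"
    using Suc.prems(1) by simp
  obtain j where j: "j < Suc n" "t n / s j \<in> G"
    using coset_count_partner[of G t n s, OF G(1) tn] Suc.prems(3) tn by blast
  define \<tau> where "\<tau> = Transposition.transpose j n"
  define s' where "s' = s \<circ> \<tau>"
  have \<tau>: "\<tau> permutes {..<Suc n}"
    unfolding \<tau>_def using j by (intro permutes_swap_id) auto
  have s'n: "s' n = s j"
    by (simp add: s'_def \<tau>_def)
  have s': "\<forall>i<Suc n. s' i > 0"
    using Suc.prems(2) permutes_in_image[OF \<tau>] by (simp add: s'_def)
  have "\<forall>r>0. coset_count G (Suc n) t r = coset_count G (Suc n) s' r"
    using Suc.prems(3) coset_count_permute[OF \<tau>] by (simp add: s'_def)
  moreover have "t n / s' n \<in> G" "s' n \<noteq> 0"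
    using j(2) s'n s' by auto
  ultimately have "\<forall>r>0. coset_count G n t r = coset_count G n s' r"
    using coset_count_drop_last[OF G(2,3)] tn by simp
  moreover have "\<forall>i<n. t i > 0" "\<forall>i<n. s' i > 0"
    using Suc.prems(1) s' by auto
  ultimately obtain \<sigma>' where \<sigma>': "\<sigma>' permutes {..<n}" "\<forall>i<n. t i / s' (\<sigma>' i) \<in> G"
    using Suc.IH by blast
  have "\<tau> \<circ> \<sigma>' permutes {..<Suc n}"
    using permutes_subset[OF \<sigma>'(1)] \<tau> by (intro permutes_compose) auto
  moreover have "t i / s ((\<tau> \<circ> \<sigma>') i) \<in> G" if "i < Suc n" for i
  proof (cases "i < n")
    case True
    then show ?thesis
      using \<sigma>'(2) by (simp add: s'_def)
  next
    case False
    then have "i = n" "\<sigma>' n = n"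
      using that permutes_not_in[OF \<sigma>'(1)] by auto
    then show ?thesis
      using j(2) s'n by (simp add: s'_def)
  qed
  ultimately show ?case
    by blast
qed

lemma wnorm_permute:
  assumes "\<sigma> permutes {..<n}" "\<forall>i<n. s (\<sigma> i) * v (y (\<sigma> i)) = t i * v (x i)"
  shows "wnorm v n s y = wnorm v n t x"
proof -
  have "(\<lambda>k. s k * v (y k)) ` {..<n} = (\<lambda>k. s k * v (y k)) ` \<sigma> ` {..<n}"
    using permutes_image[OF assms(1)] by simp
  also have "\<dots> = (\<lambda>i. t i * v (x i)) ` {..<n}"
    using assms(2) by (auto simp: image_image)
  finally show ?thesis
    by (simp add: wnorm_eq_Max_image)
qed

lemma bij_betw_weighted_permutation:
  fixes c :: "nat \<Rightarrow> 'a::field"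
  assumes \<sigma>: "\<sigma> permutes {..<n}" and c: "\<forall>i<n. c i \<noteq> 0"
  shows "bij_betw (\<lambda>x k. c (inv \<sigma> k) * x (inv \<sigma> k)) (Kn n) (Kn n)"
proof -
  let ?\<rho> = "inv \<sigma>"
  define T where "T x k = c (?\<rho> k) * x (?\<rho> k)" for x :: "nat \<Rightarrow> 'a" and k
  define S where "S y i = y (\<sigma> i) / c i" for y :: "nat \<Rightarrow> 'a" and i
  have \<rho>: "?\<rho> (\<sigma> i) = i" "\<sigma> (?\<rho> i) = i" for i
    using permutes_inverses[OF \<sigma>] by auto
  have out: "\<sigma> i = i" "?\<rho> i = i" if "\<not> i < n" for i
  proof -
    show "\<sigma> i = i"
      using permutes_not_in[OF \<sigma>] that by simp
    then show "?\<rho> i = i"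
      using \<rho>(1)[of i] by simp
  qed
  have "T x \<in> Kn n" if "x \<in> Kn n" for x
    using that out by (simp add: T_def Kn_def)
  moreover have "S y \<in> Kn n" if "y \<in> Kn n" for y
    using that out by (simp add: S_def Kn_def)
  moreover have "S (T x) = x" if "x \<in> Kn n" for x
  proof
    fix i
    show "S (T x) i = x i"
      using c that by (cases "i < n") (auto simp: S_def T_def \<rho> Kn_def)
  qed
  moreover have "T (S y) = y" if "y \<in> Kn n" for y
  proof
    fix k
    show "T (S y) k = y k"
      using c that permutes_in_image[OF \<sigma>, of "?\<rho> k"] out
      by (cases "k < n") (auto simp: S_def T_def \<rho> Kn_def)
  qed
  ultimately have "bij_betw T (Kn n) (Kn n)"
    by (intro bij_betw_byWitness[where f' = S]) auto
  then show ?thesis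
    by (simp add: T_def [abs_def])
qed

context nonarch_valued
begin

lemma isometric_iso_of_permutation:
  assumes \<sigma>: "\<sigma> permutes {..<n}" and s: "\<forall>i<n. s i > 0"
    and G: "\<forall>i<n. t i / s (\<sigma> i) \<in> value_group v"
  shows "isometric_iso v n t s"
proof -
  obtain c where c: "\<forall>i\<in>{..<n}. c i \<noteq> 0 \<and> v (c i) = t i / s (\<sigma> i)"
    using obtain_elements_with_values[of "{..<n}" "\<lambda>i. t i / s (\<sigma> i)"] G by auto
  define T where "T x k = c (inv \<sigma> k) * x (inv \<sigma> k)" for x :: "nat \<Rightarrow> 'a" and k
  have "bij_betw T (Kn n) (Kn n)"
    unfolding T_def using bij_betw_weighted_permutation[OF \<sigma>, of c] c by auto
  moreover have "Kn_linear n T"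
    unfolding Kn_linear_def T_def by (simp add: algebra_simps)
  moreover have "wnorm v n s (T x) = wnorm v n t x" for x
  proof (rule wnorm_permute[OF \<sigma>], intro allI impI)
    fix i assume "i < n"
    moreover have "s (\<sigma> i) > 0"
      using s permutes_in_image[OF \<sigma>] \<open>i < n\<close> by simp
    ultimately show "s (\<sigma> i) * v (T x (\<sigma> i)) = t i * v (x i)"
      using c permutes_inverses(2)[OF \<sigma>] by (simp add: T_def v_mult)
  qed
  ultimately show ?thesis
    unfolding isometric_iso_iff by blast
qed

end

theorem mainTheorem12:
  fixes v :: "'a::field \<Rightarrow> real" and n :: nat and t s :: "nat \<Rightarrow> real"
  assumes "nonarch_abs v" and "nontrivial_abs v" and "complete_abs v"
    and "\<not> spherically_complete v"
    and "\<forall>i<n. t i > 0" and "\<forall>i<n. s i > 0"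
  shows "isometric_iso v n t s \<longleftrightarrow>
    (\<exists>\<sigma>. \<sigma> permutes {..<n} \<and> (\<forall>i<n. t i / s (\<sigma> i) \<in> value_group v))"
proof -
  interpret nonarch_valued v
    by unfold_locales (rule assms(1))
  show ?thesis
  proof
    assume iso: "isometric_iso v n t s"
    have "\<forall>r>0. coset_count (value_group v) n t r = coset_count (value_group v) n s r"
      using coset_count_le_of_isometric_iso[OF iso assms(5,6)]
        coset_count_le_of_isometric_iso[OF isometric_iso_sym[OF iso] assms(6,5)]
      by (simp add: order_antisym)
    then show "\<exists>\<sigma>. \<sigma> permutes {..<n} \<and> (\<forall>i<n. t i / s (\<sigma> i) \<in> value_group v)"
      using permutation_of_coset_count_eq[OF one_in_value_group mult_in_value_group
          divide_in_value_group assms(5,6)] by blast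
  next
    assume "\<exists>\<sigma>. \<sigma> permutes {..<n} \<and> (\<forall>i<n. t i / s (\<sigma> i) \<in> value_group v)"
    then show "isometric_iso v n t s"
      using isometric_iso_of_permutation assms(6) by blast
  qed
qed

end
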